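(* Let $G$ be a finite group, $N$ a normal subgroup of $G$, and $A$, $B$ conjugacy classes of $G$. Suppose there exist $a\in A$ and $b\in B$ such that $AB\subseteq ab\,\mathbf{Z}(N)$. Then $\mathbf{C}_N(A)\cap\mathbf{C}_N(B)\supseteq [N,N]$. In particular $\operatorname{dl}(N/\mathbf{C}_N(A))\le 1$.
   Context: $AB=\{xy\mid x\in A,y\in B\}$; $ab\,\mathbf{Z}(N)=\{abz\mid z\in\mathbf{Z}(N)\}$ where $\mathbf{Z}(N)$ is the center of $N$. For a subset $X\subseteq G$, $\mathbf{C}_N(X)=\{n\in N\mid n^{-1}xn=x\text{ for all }x\in X\}$. $[N,N]$ is the derived subgroup of $N$ and $\operatorname{dl}$ denotes derived length. *)

theory Defs
  imports "HOL-Algebra.Algebra"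
begin

definition conj_class :: "('a, 'b) monoid_scheme \<Rightarrow> 'a \<Rightarrow> 'a set" where
  "conj_class G x = {inv\<^bsub>G\<^esub> g \<otimes>\<^bsub>G\<^esub> x \<otimes>\<^bsub>G\<^esub> g | g. g \<in> carrier G}"

definition subgroup_center :: "('a, 'b) monoid_scheme \<Rightarrow> 'a set \<Rightarrow> 'a set" where
  "subgroup_center G N = {z \<in> N. \<forall>n \<in> N. z \<otimes>\<^bsub>G\<^esub> n = n \<otimes>\<^bsub>G\<^esub> z}"

definition centralizer_in :: "('a, 'b) monoid_scheme \<Rightarrow> 'a set \<Rightarrow> 'a set \<Rightarrow> 'a set" where
  "centralizer_in G N S = {u \<in> N. \<forall>x \<in> S. (inv\<^bsub>G\<^esub> u) \<otimes>\<^bsub>G\<^esub> x \<otimes>\<^bsub>G\<^esub> u = x}"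

end

theory Submission
  imports Defs
begin

text \<open>
  Write Z for the centre of N; it is characteristic in N, hence normal in G. For x in A and
  n in N the conjugate x^n lies in A again, so both x b and x^n b lie in the coset ab Z, which
  forces x^-1 x^n into Z; symmetrically y^-1 y^n lies in Z for y in B. Once x^-1 x^n is central
  in N for all n, the map n \<mapsto> x^-1 x^n is a homomorphism from N into the abelian group Z,
  so it is trivial on [N,N], i.e. [N,N] centralizes x. A subgroup of N containing [N,N] is
  normal in N with abelian quotient.
\<close>

lemma subgroup_centerI:
  "z \<in> N \<Longrightarrow> (\<And>n. n \<in> N \<Longrightarrow> z \<otimes>\<^bsub>G\<^esub> n = n \<otimes>\<^bsub>G\<^esub> z) \<Longrightarrow> z \<in> subgroup_center G N"
  unfolding subgroup_center_def by blast

lemma subgroup_centerD: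
  assumes "z \<in> subgroup_center G N"
  shows "z \<in> N" and "n \<in> N \<Longrightarrow> z \<otimes>\<^bsub>G\<^esub> n = n \<otimes>\<^bsub>G\<^esub> z"
  using assms unfolding subgroup_center_def by blast+

lemma (in group) subgroup_center_subgroup:
  assumes "subgroup N G"
  shows "subgroup (subgroup_center G N) G"
proof -
  interpret N: subgroup N G by fact
  show ?thesis
  proof
    show "subgroup_center G N \<subseteq> carrier G"
      using N.subset by (auto dest: subgroup_centerD(1))
    show "\<one> \<in> subgroup_center G N"
      by (rule subgroup_centerI) auto
  next
    fix z w assume z: "z \<in> subgroup_center G N" and w: "w \<in> subgroup_center G N"
    note zN = subgroup_centerD(1)[OF z] and wN = subgroup_centerD(1)[OF w]
    show "z \<otimes> w \<in> subgroup_center G N"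
    proof (rule subgroup_centerI)
      fix n assume n: "n \<in> N"
      have "z \<otimes> w \<otimes> n = z \<otimes> n \<otimes> w"
        using zN wN n by (simp add: m_assoc subgroup_centerD(2)[OF w n])
      also have "\<dots> = n \<otimes> (z \<otimes> w)"
        using zN wN n by (simp add: m_assoc subgroup_centerD(2)[OF z n])
      finally show "z \<otimes> w \<otimes> n = n \<otimes> (z \<otimes> w)" .
    qed (use zN wN in auto)
  next
    fix z assume z: "z \<in> subgroup_center G N"
    note zN = subgroup_centerD(1)[OF z]
    show "inv z \<in> subgroup_center G N"
    proof (rule subgroup_centerI)
      fix n assume n: "n \<in> N"
      have "inv z \<otimes> n = inv z \<otimes> (n \<otimes> z) \<otimes> inv z"
        using zN n by (simp add: m_assoc)
      also have "\<dots> = n \<otimes> inv z"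
        using zN n by (simp add: m_assoc flip: subgroup_centerD(2)[OF z n] m_assoc[of "inv z" z])
      finally show "inv z \<otimes> n = n \<otimes> inv z" .
    qed (use zN in auto)
  qed
qed

lemma (in group) subgroup_center_normal:
  assumes "N \<lhd> G"
  shows "subgroup_center G N \<lhd> G"
proof -
  interpret N: normal N G by fact
  show ?thesis
  proof (rule normal_invI[OF subgroup_center_subgroup[OF N.subgroup_axioms]])
    fix g z assume g: "g \<in> carrier G" and z: "z \<in> subgroup_center G N"
    note zN = subgroup_centerD(1)[OF z]
    show "g \<otimes> z \<otimes> inv g \<in> subgroup_center G N"
    proof (rule subgroup_centerI)
      fix n assume n: "n \<in> N"
      have "z \<otimes> (inv g \<otimes> n \<otimes> g) = (inv g \<otimes> n \<otimes> g) \<otimes> z"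
        using subgroup_centerD(2)[OF z N.inv_op_closed1[OF g n]] .
      then have "g \<otimes> (z \<otimes> (inv g \<otimes> n \<otimes> g)) \<otimes> inv g = g \<otimes> ((inv g \<otimes> n \<otimes> g) \<otimes> z) \<otimes> inv g"
        by simp
      then show "g \<otimes> z \<otimes> inv g \<otimes> n = n \<otimes> (g \<otimes> z \<otimes> inv g)"
        using g n zN by (simp add: m_assoc flip: m_assoc[of g "inv g"])
    qed (rule N.inv_op_closed2[OF g zN])
  qed
qed

lemma (in group) comm_group_subgroup_center:
  assumes "subgroup N G"
  shows "comm_group (G\<lparr>carrier := subgroup_center G N\<rparr>)"
proof (rule group.group_comm_groupI)
  show "group (G\<lparr>carrier := subgroup_center G N\<rparr>)"
    by (rule subgroup_imp_group[OF subgroup_center_subgroup[OF assms]])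
  fix z w assume z: "z \<in> carrier (G\<lparr>carrier := subgroup_center G N\<rparr>)"
    and w: "w \<in> carrier (G\<lparr>carrier := subgroup_center G N\<rparr>)"
  show "z \<otimes>\<^bsub>G\<lparr>carrier := subgroup_center G N\<rparr>\<^esub> w = w \<otimes>\<^bsub>G\<lparr>carrier := subgroup_center G N\<rparr>\<^esub> z"
    using subgroup_centerD(2)[of z G N w] subgroup_centerD(1)[of w G N] z w by simp
qed

lemma (in group) conj_class_subset_carrier:
  "x \<in> carrier G \<Longrightarrow> conj_class G x \<subseteq> carrier G"
  unfolding conj_class_def by auto

lemma (in group) conj_class_conj_closed:
  assumes "x \<in> carrier G" "y \<in> conj_class G x" "g \<in> carrier G"
  shows "inv g \<otimes> y \<otimes> g \<in> conj_class G x"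
proof -
  obtain h where h: "h \<in> carrier G" "y = inv h \<otimes> x \<otimes> h"
    using assms(2) unfolding conj_class_def by auto
  have "inv g \<otimes> y \<otimes> g = inv (h \<otimes> g) \<otimes> x \<otimes> (h \<otimes> g)"
    using h assms(1,3) by (simp add: m_assoc inv_mult_group)
  then show ?thesis
    unfolding conj_class_def using h assms(3) by blast
qed

lemma (in group) inv_mult_mem_normal_if_same_lcos:
  assumes Z: "Z \<lhd> G"
    and carr: "c \<in> carrier G" "u \<in> carrier G" "v \<in> carrier G" "x \<in> carrier G" "x' \<in> carrier G"
    and x: "u \<otimes> x \<otimes> v \<in> c <# Z" and x': "u \<otimes> x' \<otimes> v \<in> c <# Z"
  shows "inv x \<otimes> x' \<in> Z"
proof -
  interpret Z: normal Z G by fact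
  obtain z z' where z: "z \<in> Z" "u \<otimes> x \<otimes> v = c \<otimes> z" and z': "z' \<in> Z" "u \<otimes> x' \<otimes> v = c \<otimes> z'"
    using x x' unfolding l_coset_def by blast
  have "inv x \<otimes> x' = v \<otimes> (inv (u \<otimes> x \<otimes> v) \<otimes> (u \<otimes> x' \<otimes> v)) \<otimes> inv v"
    using carr by (simp add: inv_mult_group m_assoc flip: m_assoc[of "inv u" u] m_assoc[of v "inv v"])
  also have "\<dots> = v \<otimes> (inv z \<otimes> z') \<otimes> inv v"
    using carr z z' by (simp add: inv_mult_group m_assoc flip: m_assoc[of "inv c" c])
  finally show ?thesis
    using Z.inv_op_closed2[OF carr(3)] z(1) z'(1) by simp
qed

lemma centralizer_inI:
  "u \<in> N \<Longrightarrow> (\<And>x. x \<in> S \<Longrightarrow> inv\<^bsub>G\<^esub> u \<otimes>\<^bsub>G\<^esub> x \<otimes>\<^bsub>G\<^esub> u = x) \<Longrightarrow> u \<in> centralizer_in G N S"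
  unfolding centralizer_in_def by blast

lemma centralizer_inD:
  assumes "u \<in> centralizer_in G N S"
  shows "u \<in> N" and "x \<in> S \<Longrightarrow> inv\<^bsub>G\<^esub> u \<otimes>\<^bsub>G\<^esub> x \<otimes>\<^bsub>G\<^esub> u = x"
  using assms unfolding centralizer_in_def by blast+

lemma (in group) centralizer_in_subgroup:
  assumes N: "subgroup N G" and S: "S \<subseteq> carrier G"
  shows "subgroup (centralizer_in G N S) G"
proof -
  interpret N: subgroup N G by fact
  show ?thesis
  proof
    show "centralizer_in G N S \<subseteq> carrier G"
      using N.subset by (auto dest: centralizer_inD(1))
    show "\<one> \<in> centralizer_in G N S"
      using S by (intro centralizer_inI) auto
  next
    fix u v assume u: "u \<in> centralizer_in G N S" and v: "v \<in> centralizer_in G N S"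
    note uN = centralizer_inD(1)[OF u] and vN = centralizer_inD(1)[OF v]
    show "u \<otimes> v \<in> centralizer_in G N S"
    proof (rule centralizer_inI)
      fix x assume x: "x \<in> S"
      have "inv (u \<otimes> v) \<otimes> x \<otimes> (u \<otimes> v) = inv v \<otimes> (inv u \<otimes> x \<otimes> u) \<otimes> v"
        using uN vN x S by (auto simp: m_assoc inv_mult_group)
      also have "\<dots> = x"
        using centralizer_inD(2)[OF u x] centralizer_inD(2)[OF v x] by simp
      finally show "inv (u \<otimes> v) \<otimes> x \<otimes> (u \<otimes> v) = x" .
    qed (use uN vN in simp)
  next
    fix u assume u: "u \<in> centralizer_in G N S"
    note uN = centralizer_inD(1)[OF u]
    show "inv u \<in> centralizer_in G N S"
    proof (rule centralizer_inI)
      fix x assume x: "x \<in> S"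
      have "inv (inv u) \<otimes> x \<otimes> inv u = u \<otimes> (inv u \<otimes> x \<otimes> u) \<otimes> inv u"
        using centralizer_inD(2)[OF u x] uN by simp
      also have "\<dots> = x"
        using uN x S by (auto simp: m_assoc simp flip: m_assoc[of u "inv u"])
      finally show "inv (inv u) \<otimes> x \<otimes> inv u = x" .
    qed (use uN in simp)
  qed
qed

text \<open>The map n \<mapsto> x^-1 x^n is anti-multiplicative with central values, hence a
  homomorphism into the abelian group Z(N).\<close>

lemma (in group) derived_centralizes:
  assumes N: "subgroup N G" and x: "x \<in> carrier G"
    and comm: "\<And>n. n \<in> N \<Longrightarrow> inv x \<otimes> (inv n \<otimes> x \<otimes> n) \<in> subgroup_center G N"
    and c: "c \<in> derived G N"
  shows "inv c \<otimes> x \<otimes> c = x"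
proof -
  interpret N: subgroup N G by fact
  define f where "f n = inv x \<otimes> (inv n \<otimes> x \<otimes> n)" for n
  let ?N = "G\<lparr>carrier := N\<rparr>" and ?Z = "G\<lparr>carrier := subgroup_center G N\<rparr>"
  have f_N: "f n \<in> N" and f_comm: "m \<in> N \<Longrightarrow> f n \<otimes> m = m \<otimes> f n" if "n \<in> N" for n m
    using subgroup_centerD[OF comm[OF that]] by (simp_all add: f_def)
  have conj_eq: "inv n \<otimes> x \<otimes> n = x \<otimes> f n" if "n \<in> carrier G" for n
    using that x by (simp add: f_def m_assoc flip: m_assoc[of x "inv x"])
  have f_mult: "f (n \<otimes> m) = f n \<otimes> f m" if n: "n \<in> N" and m: "m \<in> N" for n m
  proof -
    have "f (n \<otimes> m) = inv x \<otimes> (inv m \<otimes> (inv n \<otimes> x \<otimes> n) \<otimes> m)"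
      using n m x by (simp add: f_def inv_mult_group m_assoc)
    also have "\<dots> = inv x \<otimes> (inv m \<otimes> (x \<otimes> f n) \<otimes> m)"
      using n by (simp only: conj_eq N.mem_carrier)
    also have "\<dots> = inv x \<otimes> (inv m \<otimes> x \<otimes> m) \<otimes> f n"
      using n m x f_N[OF n] by (simp add: m_assoc f_comm[OF n m])
    also have "\<dots> = f n \<otimes> f m"
      using f_comm[OF m f_N[OF n]] by (simp add: f_def)
    finally show ?thesis .
  qed
  interpret ZG: comm_group ?Z
    by (rule comm_group_subgroup_center[OF N])
  have "f \<in> hom ?N ?Z"
    using comm f_mult by (intro homI) (simp_all add: f_def)
  then interpret f: group_hom ?N ?Z f
    by (simp add: group_hom_def group_hom_axioms_def subgroup_imp_group[OF N] ZG.is_group)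
  have "f ` derived G N = derived ?Z (f ` N)"
    using f.derived_img[of N] derived_consistent[OF subset_refl N] by simp
  also have "\<dots> = {\<one>}"
    using ZG.derived_eq_singleton[of "f ` N"] comm by (auto simp: f_def)
  finally have "f c = \<one>" using c by blast
  then show ?thesis
    using conj_eq c derived_incl[OF subset_refl N] x by auto
qed

lemma (in group) derived_subset_centralizer_in:
  assumes N: "subgroup N G" and S: "S \<subseteq> carrier G"
    and comm: "\<And>x n. x \<in> S \<Longrightarrow> n \<in> N \<Longrightarrow> inv x \<otimes> (inv n \<otimes> x \<otimes> n) \<in> subgroup_center G N"
  shows "derived G N \<subseteq> centralizer_in G N S"
  using derived_centralizes[OF N _ comm] derived_incl[OF subset_refl N] S
  unfolding centralizer_in_def by blast

lemma (in group) commutator_mem_derived: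
  "g \<in> carrier G \<Longrightarrow> h \<in> carrier G \<Longrightarrow> g \<otimes> h \<otimes> inv g \<otimes> inv h \<in> derived G (carrier G)"
  unfolding derived_def by (rule generate.incl) blast

lemma (in group) normal_if_derived_subset:
  assumes K: "subgroup K G" and D: "derived G (carrier G) \<subseteq> K"
  shows "K \<lhd> G"
proof (rule normal_invI[OF K])
  fix g h assume g: "g \<in> carrier G" and h: "h \<in> K"
  have hc: "h \<in> carrier G" using h subgroup.subset[OF K] by blast
  have "g \<otimes> h \<otimes> inv g = (g \<otimes> h \<otimes> inv g \<otimes> inv h) \<otimes> h"
    using g hc by (simp add: m_assoc)
  moreover have "g \<otimes> h \<otimes> inv g \<otimes> inv h \<in> K"
    using commutator_mem_derived[OF g hc] D by blast
  ultimately show "g \<otimes> h \<otimes> inv g \<in> K"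
    using subgroup.m_closed[OF K _ h] by metis
qed

lemma (in group) comm_group_Mod_if_derived_subset:
  assumes K: "subgroup K G" and D: "derived G (carrier G) \<subseteq> K"
  shows "comm_group (G Mod K)"
proof -
  interpret K: normal K G
    by (rule normal_if_derived_subset[OF K D])
  have swap: "K #> (g \<otimes> h) = K #> (h \<otimes> g)" if g: "g \<in> carrier G" and h: "h \<in> carrier G" for g h
  proof -
    have "g \<otimes> h = (g \<otimes> h \<otimes> inv g \<otimes> inv h) \<otimes> (h \<otimes> g)"
      using g h by (simp add: m_assoc flip: m_assoc[of "inv h" h])
    then have "g \<otimes> h \<in> K #> (h \<otimes> g)"
      using commutator_mem_derived[OF g h] D unfolding r_coset_def by blast
    then show ?thesis
      using repr_independence[OF _ m_closed[OF h g] K] by simp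
  qed
  show ?thesis
  proof (rule group.group_comm_groupI[OF K.factorgroup_is_group])
    fix P Q assume "P \<in> carrier (G Mod K)" and "Q \<in> carrier (G Mod K)"
    then obtain g h where g: "g \<in> carrier G" "P = K #> g" and h: "h \<in> carrier G" "Q = K #> h"
      unfolding FactGroup_def RCOSETS_def by auto
    then show "P \<otimes>\<^bsub>G Mod K\<^esub> Q = Q \<otimes>\<^bsub>G Mod K\<^esub> P"
      using swap[OF g(1) h(1)] by (simp add: K.rcos_sum)
  qed
qed

lemma (in group) conj_class_commutators_in_normal:
  assumes Z: "Z \<lhd> G" and x0: "x0 \<in> carrier G" and y0: "y0 \<in> carrier G"
    and a: "a \<in> conj_class G x0" and b: "b \<in> conj_class G y0"
    and prod: "conj_class G x0 <#> conj_class G y0 \<subseteq> (a \<otimes> b) <# Z"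
    and g: "g \<in> carrier G"
  shows "x \<in> conj_class G x0 \<Longrightarrow> inv x \<otimes> (inv g \<otimes> x \<otimes> g) \<in> Z"
    and "y \<in> conj_class G y0 \<Longrightarrow> inv y \<otimes> (inv g \<otimes> y \<otimes> g) \<in> Z"
proof -
  have A: "conj_class G x0 \<subseteq> carrier G" and B: "conj_class G y0 \<subseteq> carrier G"
    using conj_class_subset_carrier x0 y0 by auto
  have ab: "a \<in> carrier G" "b \<in> carrier G" using A B a b by auto
  have in_lcos: "p \<otimes> q \<in> (a \<otimes> b) <# Z" if "p \<in> conj_class G x0" "q \<in> conj_class G y0" for p q
    using prod that unfolding set_mult_def by blast
  note lcos = inv_mult_mem_normal_if_same_lcos[OF Z m_closed[OF ab]]
  show "inv x \<otimes> (inv g \<otimes> x \<otimes> g) \<in> Z" if x: "x \<in> conj_class G x0"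
  proof -
    have xg: "inv g \<otimes> x \<otimes> g \<in> conj_class G x0" using conj_class_conj_closed x0 x g .
    then show ?thesis
      using lcos[OF one_closed ab(2), of x "inv g \<otimes> x \<otimes> g"] in_lcos[OF x b] in_lcos[OF xg b] x A
      by auto
  qed
  show "inv y \<otimes> (inv g \<otimes> y \<otimes> g) \<in> Z" if y: "y \<in> conj_class G y0"
  proof -
    have yg: "inv g \<otimes> y \<otimes> g \<in> conj_class G y0" using conj_class_conj_closed y0 y g .
    then show ?thesis
      using lcos[OF ab(1) one_closed, of y "inv g \<otimes> y \<otimes> g"] in_lcos[OF a y] in_lcos[OF a yg] y B ab(1)
      by auto
  qed
qed

theorem lemma3p2:
  fixes G (structure) and N A B :: "'a set" and a b :: 'a
  assumes "group G" and "finite (carrier G)"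
    and "N \<lhd> G"
    and "\<exists>x \<in> carrier G. A = conj_class G x"
    and "\<exists>y \<in> carrier G. B = conj_class G y"
    and "a \<in> A" and "b \<in> B"
    and "A <#> B \<subseteq> (a \<otimes> b) <# subgroup_center G N"
  shows "derived G N \<subseteq> centralizer_in G N A \<inter> centralizer_in G N B
         \<and> comm_group ((G\<lparr>carrier := N\<rparr>) Mod (centralizer_in G N A))"
proof -
  interpret group G by fact
  interpret N: normal N G by fact
  obtain x0 where x0: "x0 \<in> carrier G" "A = conj_class G x0" using assms(4) by blast
  obtain y0 where y0: "y0 \<in> carrier G" "B = conj_class G y0" using assms(5) by blast
  have A: "A \<subseteq> carrier G" and B: "B \<subseteq> carrier G"
    using conj_class_subset_carrier x0 y0 by auto
  note commutators = conj_class_commutators_in_normal[OF subgroup_center_normal[OF assms(3)]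
      x0(1) y0(1) assms(6-8)[unfolded x0(2) y0(2)]]
  have "derived G N \<subseteq> centralizer_in G N A"
    using derived_subset_centralizer_in[OF N.subgroup_axioms A] commutators(1) x0(2) by auto
  moreover have "derived G N \<subseteq> centralizer_in G N B"
    using derived_subset_centralizer_in[OF N.subgroup_axioms B] commutators(2) y0(2) by auto
  moreover have "subgroup (centralizer_in G N A) (G\<lparr>carrier := N\<rparr>)"
    using subgroup_incl[OF centralizer_in_subgroup[OF N.subgroup_axioms A] N.subgroup_axioms]
    by (auto dest: centralizer_inD(1))
  ultimately show ?thesis
    using group.comm_group_Mod_if_derived_subset[OF subgroup_imp_group[OF N.subgroup_axioms]]
      derived_consistent[OF subset_refl N.subgroup_axioms] by auto
qed

end
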